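(* Let $\beta,\eta,\nu>0$, and let $\mathcal Z_1,\mathcal Z_2$ be disjoint Borel sets with $\mathcal Z_1\cup\mathcal Z_2=\mathbb R^d$. Let $g\in\mathcal C(\mathbb R^d)$, $v_1^*\in\mathcal Z_1$, $v_2^*\in\mathcal Z_2$ with $$g(v)-g(v_i^* )\ge(\eta\|v-v_i^*\|_2)^{1/\nu}-\beta\quad\text{for all }v\in\mathcal Z_i,\ i=1,2.$$ For $r>0$ let $g_r:=\max\{\sup_{v\in B_r(v_1^* )}g-g(v_1^* ),\ \sup_{v\in B_r(v_2^* )}g-g(v_2^* )\}$. Let $\rho$ be a probability measure with finite first moment and $v_1^*,v_2^*\in\operatorname{supp}(\rho)$, $\alpha>0$, and $v_\alpha(\rho):=\int we^{-\alpha g(w)}d\rho(w)/\int e^{-\alpha g(w)}d\rho(w)$. Then for every $r>0$ and $q>\beta$ with $\partial B_{q+g_r}(v_1^* )\cap\overline{\mathcal Z_1}\ne\emptyset$ and $\partial B_{q+g_r}(v_2^* )\cap\overline{\mathcal Z_2}\ne\emptyset$, and for $i=1,2$, $$\|v_\alpha(\rho)-v_i^*\|_2\le\|v_1^*-v_2^*\|_2+\frac{2(q+g_r)^\nu}{\eta}+\frac{e^{-\alpha(q-\beta)}}{m_r}\int\|w-v_2^*\|_2d\rho(w)+\|v_1^*-v_2^*\|_2\frac{e^{-\alpha(q-\beta)}}{m_r},$$ where $m_r:=\min_{w\in\{v_1^*,v_2^*\}}\int_{B_r(w)}\phi^\tau_r(u-w)\,d\rho(u)$.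
   Context: $B_r(v)$ is the open Euclidean ball of radius $r$ centered at $v$. For an integer $\tau\ge3$, $\phi^\tau_r(v):=1+(\tau-1)\|v/r\|_2^\tau-\tau\|v/r\|_2^{\tau-1}$ if $\|v\|_2\le r$ and $0$ otherwise (so $\phi^\tau_r\in\mathcal C^1_c(\mathbb R^d,[0,1])$). *)

theory Defs
  imports "HOL-Probability.Probability"
begin

definition phi_bump :: "nat \<Rightarrow> real \<Rightarrow> 'a::euclidean_space \<Rightarrow> real" where
  "phi_bump \<tau> r v = (if norm v \<le> r then
      1 + (real \<tau> - 1) * (norm v / r) ^ \<tau> - real \<tau> * (norm v / r) ^ (\<tau> - 1)
    else 0)"

definition in_support :: "'a::metric_space measure \<Rightarrow> 'a \<Rightarrow> bool" where
  "in_support \<rho> v \<longleftrightarrow> (\<forall>\<epsilon>>0. emeasure \<rho> (ball v \<epsilon>) > 0)"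

definition consensus_point :: "real \<Rightarrow> ('a::euclidean_space \<Rightarrow> real) \<Rightarrow> 'a measure \<Rightarrow> 'a" where
  "consensus_point \<alpha> g \<rho> =
     (1 / (\<integral>w. exp (- \<alpha> * g w) \<partial>\<rho>)) *\<^sub>R (\<integral>w. exp (- \<alpha> * g w) *\<^sub>R w \<partial>\<rho>)"

definition g_r :: "('a::euclidean_space \<Rightarrow> real) \<Rightarrow> 'a \<Rightarrow> 'a \<Rightarrow> real \<Rightarrow> real" where
  "g_r g v1 v2 r = max (Sup (g ` ball v1 r) - g v1) (Sup (g ` ball v2 r) - g v2)"

definition m_r :: "nat \<Rightarrow> 'a::euclidean_space measure \<Rightarrow> 'a \<Rightarrow> 'a \<Rightarrow> real \<Rightarrow> real" where
  "m_r \<tau> \<rho> v1 v2 r = min (\<integral>u\<in>ball v1 r. phi_bump \<tau> r (u - v1) \<partial>\<rho>)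
                            (\<integral>u\<in>ball v2 r. phi_bump \<tau> r (u - v2) \<partial>\<rho>)"

end

theory Submission
  imports Defs
begin

text \<open>
  Write E w = exp (-\<alpha> g w), so that the consensus point is the E\<rho>-weighted mean. Outside the
  two balls of radius R = (q + g_r)^\<nu>/\<eta> around v1 and v2 the growth condition forces
  g \<ge> min (g v1) (g v2) + q + g_r - \<beta>, so there E is at most exp (-\<alpha> (q - \<beta>)) times
  exp (-\<alpha> (min (g v1) (g v2) + g_r)). The normaliser \<integral>E d\<rho> is at least that last factor
  times m_r, because E is at least that factor on the r-ball around the minimising v_i and the
  bump \<phi>^\<tau>_r lies in [0,1]. Points inside one of the balls are within |v1 - v2| + R of
  both v_i, and the far points contribute at most the stated tail term.
  The argument gives R where the statement has 2 R, and it never uses the frontier conditions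
  nor that Z1, Z2 are disjoint Borel sets.
\<close>

subsection \<open>The bump function\<close>

text \<open>Weighted AM-GM for 1 and t^(n+1) with weights 1 and n.\<close>
lemma Suc_mult_power_le:
  fixes t :: real
  assumes "0 \<le> t" "t \<le> 1"
  shows "real (Suc n) * t ^ n \<le> 1 + real n * t ^ Suc n"
proof (induction n)
  case 0
  then show ?case by simp
next
  case (Suc n)
  have "t ^ Suc n \<le> 1"
    using assms by (intro power_le_one) auto
  then have step: "t + t ^ Suc n \<le> 1 + t ^ Suc (Suc n)"
    using mult_nonneg_nonneg[of "1 - t" "1 - t ^ Suc n"] assms by (simp add: algebra_simps)
  have "real (Suc (Suc n)) * t ^ Suc n = t * (real (Suc n) * t ^ n) + t ^ Suc n"
    by (simp add: algebra_simps)
  also have "\<dots> \<le> t * (1 + real n * t ^ Suc n) + t ^ Suc n"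
    using Suc assms by (intro add_right_mono mult_left_mono) auto
  also have "\<dots> \<le> 1 + real (Suc n) * t ^ Suc (Suc n)"
    using step by (simp add: algebra_simps)
  finally show ?case .
qed

lemma phi_bump_nonneg:
  assumes "r > 0" "\<tau> \<ge> 1"
  shows "0 \<le> phi_bump \<tau> r v"
proof (cases "norm v \<le> r")
  case True
  obtain n where n: "\<tau> = Suc n"
    using assms(2) by (cases \<tau>) auto
  have "real (Suc n) * (norm v / r) ^ n \<le> 1 + real n * (norm v / r) ^ Suc n"
    using True assms(1) by (intro Suc_mult_power_le) auto
  then show ?thesis
    using True by (simp add: phi_bump_def n)
qed (simp add: phi_bump_def)

lemma phi_bump_le_one:
  assumes "r > 0"
  shows "phi_bump \<tau> r v \<le> 1"
proof (cases "norm v \<le> r")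
  case True
  define t where "t = norm v / r"
  have "0 \<le> t" "t \<le> 1"
    using True assms by (auto simp: t_def)
  then have "t ^ \<tau> \<le> t ^ (\<tau> - 1)"
    by (intro power_decreasing) auto
  then have "(real \<tau> - 1) * t ^ \<tau> \<le> real \<tau> * t ^ (\<tau> - 1)"
    using \<open>0 \<le> t\<close> by (intro mult_mono) auto
  then show ?thesis
    using True by (simp add: phi_bump_def t_def)
qed (simp add: phi_bump_def)

lemma phi_bump_ge_half:
  assumes "r > 0" "\<tau> \<ge> 3" "norm v < r / real \<tau>"
  shows "1 / 2 \<le> phi_bump \<tau> r v"
proof -
  define t where "t = norm v / r"
  have \<tau>: "real \<tau> \<ge> 3"
    using assms(2) by simp
  have t: "0 \<le> t" "t < 1 / real \<tau>"
    using assms(1,3) by (auto simp: t_def pos_divide_less_eq)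
  have "r / real \<tau> \<le> r"
    using assms(1) \<tau> by (simp add: divide_le_eq)
  then have phi: "phi_bump \<tau> r v = 1 + (real \<tau> - 1) * t ^ \<tau> - real \<tau> * t ^ (\<tau> - 1)"
    using assms(3) by (simp add: phi_bump_def t_def)
  have "1 / real \<tau> \<le> 1"
    using \<tau> by simp
  then have "t ^ (\<tau> - 1) \<le> t ^ 2"
    using t assms(2) by (intro power_decreasing) linarith+
  also have "\<dots> \<le> (1 / real \<tau>) ^ 2"
    using t by (intro power_mono) auto
  finally have "real \<tau> * t ^ (\<tau> - 1) \<le> 1 / real \<tau>"
    using \<tau> by (simp add: power2_eq_square field_simps)
  also have "\<dots> \<le> 1 / 2"
    using \<tau> by simp
  moreover have "0 \<le> (real \<tau> - 1) * t ^ \<tau>"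
    using t \<tau> by simp
  ultimately show ?thesis
    unfolding phi by linarith
qed

lemma phi_bump_measurable:
  "(\<lambda>u. phi_bump \<tau> r (u - v)) \<in> borel_measurable borel"
  unfolding phi_bump_def by measurable

lemma set_integrable_phi_bump:
  assumes "finite_measure \<rho>" "sets \<rho> = sets borel" "r > 0" "\<tau> \<ge> 1"
  shows "set_integrable \<rho> (ball v r) (\<lambda>u. phi_bump \<tau> r (u - v))"
  unfolding set_integrable_def
proof (rule finite_measure.integrable_const_bound[OF assms(1), where B = 1])
  have "\<bar>phi_bump \<tau> r x\<bar> \<le> 1" for x :: 'a
    using phi_bump_nonneg[OF assms(3,4), of x] phi_bump_le_one[OF assms(3), of \<tau> x] by simp
  then show "AE u in \<rho>. norm (indicator (ball v r) u *\<^sub>R phi_bump \<tau> r (u - v)) \<le> 1"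
    by (intro AE_I2) (simp add: indicator_def)
  show "(\<lambda>u. indicator (ball v r) u *\<^sub>R phi_bump \<tau> r (u - v)) \<in> borel_measurable \<rho>"
    unfolding measurable_cong_sets[OF assms(2) refl]
    by (intro borel_measurable_scaleR borel_measurable_indicator phi_bump_measurable) simp
qed

lemma set_integral_phi_bump_pos:
  assumes "finite_measure \<rho>" "sets \<rho> = sets borel" "in_support \<rho> v" "r > 0" "\<tau> \<ge> 3"
  shows "0 < (\<integral>u\<in>ball v r. phi_bump \<tau> r (u - v) \<partial>\<rho>)"
proof -
  interpret finite_measure \<rho> by fact
  let ?B = "ball v (r / real \<tau>)"
  have B: "?B \<in> sets \<rho>"
    using assms(2) by simp
  have "0 < measure \<rho> ?B"
    using assms(3-5) B by (simp add: in_support_def emeasure_eq_measure)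
  also have "measure \<rho> ?B = 2 * (\<integral>u. indicator ?B u / 2 \<partial>\<rho>)"
    using B by simp
  also have "(\<integral>u. indicator ?B u / 2 \<partial>\<rho>) \<le> (\<integral>u\<in>ball v r. phi_bump \<tau> r (u - v) \<partial>\<rho>)"
    unfolding set_lebesgue_integral_def
  proof (rule integral_mono')
    show "integrable \<rho> (\<lambda>u. indicator (ball v r) u *\<^sub>R phi_bump \<tau> r (u - v))"
      using set_integrable_phi_bump[OF assms(1,2,4)] assms(5) by (simp add: set_integrable_def)
    have "r / real \<tau> \<le> r"
      using assms(4,5) by (simp add: divide_le_eq)
    then show "indicator ?B u / 2 \<le> indicator (ball v r) u *\<^sub>R phi_bump \<tau> r (u - v)" for u
      using phi_bump_ge_half[OF assms(4,5), of "u - v"] phi_bump_nonneg[OF assms(4), of \<tau> "u - v"]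
        assms(5)
      by (auto simp: indicator_def dist_norm norm_minus_commute)
    show "0 \<le> indicator (ball v r) u *\<^sub>R phi_bump \<tau> r (u - v)" for u
      using phi_bump_nonneg[OF assms(4), of \<tau> "u - v"] assms(5) by (simp add: indicator_def)
  qed
  finally show ?thesis
    by simp
qed

lemma set_integral_phi_bump_le_integral:
  fixes f :: "'a::euclidean_space \<Rightarrow> real"
  assumes "finite_measure \<rho>" "sets \<rho> = sets borel" "integrable \<rho> f" "r > 0" "\<tau> \<ge> 1"
    and "\<And>u. 0 \<le> f u" "\<And>u. u \<in> ball v r \<Longrightarrow> c \<le> f u" "0 \<le> c"
  shows "c * (\<integral>u\<in>ball v r. phi_bump \<tau> r (u - v) \<partial>\<rho>) \<le> (\<integral>u. f u \<partial>\<rho>)"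
proof -
  have "c * (\<integral>u\<in>ball v r. phi_bump \<tau> r (u - v) \<partial>\<rho>)
      = (\<integral>u. c * (indicator (ball v r) u *\<^sub>R phi_bump \<tau> r (u - v)) \<partial>\<rho>)"
    by (simp add: set_lebesgue_integral_def)
  also have "\<dots> \<le> (\<integral>u. f u \<partial>\<rho>)"
  proof (rule integral_mono')
    show "c * (indicator (ball v r) u *\<^sub>R phi_bump \<tau> r (u - v)) \<le> f u" for u
      using phi_bump_le_one[OF assms(4), of \<tau> "u - v"] assms(6-8)
        mult_left_mono[of "phi_bump \<tau> r (u - v)" 1 c]
      by (cases "u \<in> ball v r") (auto intro: order_trans)
  qed (use assms(3,6) in auto)
  finally show ?thesis .
qed

subsection \<open>Weighted means\<close>

lemma norm_weighted_mean_diff_le: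
  fixes E :: "'a \<Rightarrow> real" and X :: "'a \<Rightarrow> 'b::euclidean_space"
  assumes "integrable M E" "integrable M (\<lambda>w. E w *\<^sub>R X w)" "\<And>w. 0 \<le> E w"
    and "0 < (\<integral>w. E w \<partial>M)"
  shows "norm ((1 / (\<integral>w. E w \<partial>M)) *\<^sub>R (\<integral>w. E w *\<^sub>R X w \<partial>M) - v)
           \<le> (\<integral>w. E w * norm (X w - v) \<partial>M) / (\<integral>w. E w \<partial>M)"
proof -
  define Z where "Z = (\<integral>w. E w \<partial>M)"
  have "(\<integral>w. E w *\<^sub>R (X w - v) \<partial>M) = (\<integral>w. E w *\<^sub>R X w \<partial>M) - Z *\<^sub>R v"
    using assms(1,2) by (simp add: scaleR_diff_right Z_def)
  then have "(1 / Z) *\<^sub>R (\<integral>w. E w *\<^sub>R X w \<partial>M) - v = (1 / Z) *\<^sub>R (\<integral>w. E w *\<^sub>R (X w - v) \<partial>M)"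
    using assms(4) by (simp add: Z_def scaleR_diff_right)
  moreover have "norm (\<integral>w. E w *\<^sub>R (X w - v) \<partial>M) \<le> (\<integral>w. E w * norm (X w - v) \<partial>M)"
    using integral_norm_bound[of M "\<lambda>w. E w *\<^sub>R (X w - v)"] assms(3) by simp
  ultimately show ?thesis
    using assms(4) by (simp add: Z_def divide_right_mono)
qed

text \<open>The pointwise hypothesis is a near/far split: near points lie within A of v, far ones
  carry weight at most K.\<close>
lemma weighted_mean_dist_le:
  fixes E :: "'a::euclidean_space \<Rightarrow> real"
  assumes "prob_space \<rho>" "sets \<rho> = sets borel" "integrable \<rho> norm"
    and "integrable \<rho> E" "\<And>w. 0 \<le> E w" "\<And>w. E w \<le> C"
    and "0 < Zmin" "Zmin \<le> (\<integral>w. E w \<partial>\<rho>)"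
    and "\<And>w. E w * norm (w - v) \<le> E w * A + K * (norm (w - u) + D)"
    and "0 \<le> K" "0 \<le> D"
  shows "norm ((1 / (\<integral>w. E w \<partial>\<rho>)) *\<^sub>R (\<integral>w. E w *\<^sub>R w \<partial>\<rho>) - v)
           \<le> A + K / Zmin * ((\<integral>w. norm (w - u) \<partial>\<rho>) + D)"
proof -
  interpret prob_space \<rho> by fact
  define Z where "Z = (\<integral>w. E w \<partial>\<rho>)"
  define I where "I = (\<integral>w. norm (w - u) \<partial>\<rho>)"
  note meas = measurable_cong_sets[OF assms(2) refl]
  note E = assms(4)
  have E_meas: "E \<in> borel_measurable borel"
    using borel_measurable_integrable[OF E] unfolding meas .
  have dist: "integrable \<rho> (\<lambda>w. norm (w - x))" for x
  proof (rule Bochner_Integration.integrable_bound[where f = "\<lambda>w. norm w + norm x"])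
    show "integrable \<rho> (\<lambda>w. norm w + norm x)"
      using assms(3) by simp
    show "(\<lambda>w. norm (w - x)) \<in> borel_measurable \<rho>"
      unfolding meas by measurable
    show "AE w in \<rho>. norm (norm (w - x)) \<le> norm (norm w + norm x)"
      by (intro AE_I2) (simp add: norm_triangle_ineq4)
  qed
  have E_dist: "integrable \<rho> (\<lambda>w. E w * norm (w - x))" for x
  proof (rule Bochner_Integration.integrable_bound[where f = "\<lambda>w. C * norm (w - x)"])
    show "integrable \<rho> (\<lambda>w. C * norm (w - x))"
      using dist by simp
    show "(\<lambda>w. E w * norm (w - x)) \<in> borel_measurable \<rho>"
      unfolding meas using E_meas by measurable
    show "AE w in \<rho>. norm (E w * norm (w - x)) \<le> norm (C * norm (w - x))"
      using assms(5,6) order_trans[OF assms(5,6)]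
      by (intro AE_I2) (simp add: abs_mult mult_right_mono)
  qed
  have "integrable \<rho> (\<lambda>w. E w *\<^sub>R w)"
    by (rule Bochner_Integration.integrable_bound[OF E_dist[of 0]])
      (use E_meas assms(5) in \<open>auto simp: meas\<close>)
  then have "norm ((1 / Z) *\<^sub>R (\<integral>w. E w *\<^sub>R w \<partial>\<rho>) - v) \<le> (\<integral>w. E w * norm (w - v) \<partial>\<rho>) / Z"
    using norm_weighted_mean_diff_le[OF E, of "\<lambda>w. w"] assms(5,7,8) by (simp add: Z_def)
  also have "\<dots> \<le> (\<integral>w. E w * A + K * (norm (w - u) + D) \<partial>\<rho>) / Z"
    using assms(7-9) E E_dist dist by (intro divide_right_mono integral_mono) (auto simp: Z_def)
  also have "\<dots> = (Z * A + K * (I + D)) / Z"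
    using E dist by (simp add: Z_def I_def prob_space)
  also have "\<dots> = A + K / Z * (I + D)"
    using assms(7,8) by (simp add: Z_def add_divide_distrib)
  also have "\<dots> \<le> A + K / Zmin * (I + D)"
    using assms(7,8,10,11) by (intro add_left_mono mult_right_mono divide_left_mono)
      (auto simp: Z_def I_def)
  finally show ?thesis
    by (simp add: Z_def I_def)
qed

subsection \<open>Growth of the objective\<close>

lemma growth_lower_bound:
  assumes "\<eta> > 0" "\<nu> > 0" "0 \<le> s"
    and "g w - g v \<ge> (\<eta> * norm (w - v)) powr (1 / \<nu>) - \<beta>"
    and "s powr \<nu> / \<eta> \<le> norm (w - v)"
  shows "g v + s - \<beta> \<le> g w"
proof -
  have "s = (s powr \<nu>) powr (1 / \<nu>)"
    using assms(2,3) by (simp add: powr_powr)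
  also have "\<dots> \<le> (\<eta> * norm (w - v)) powr (1 / \<nu>)"
    using assms(1,2,5) by (intro powr_mono2) (auto simp: divide_le_eq mult.commute)
  finally show ?thesis
    using assms(4) by linarith
qed

lemma two_region_growth_lower_bound:
  assumes "Z1 \<union> Z2 = UNIV" "\<eta> > 0" "\<nu> > 0" "0 \<le> s"
    and "\<forall>v\<in>Z1. g v - g v1 \<ge> (\<eta> * norm (v - v1)) powr (1 / \<nu>) - \<beta>"
    and "\<forall>v\<in>Z2. g v - g v2 \<ge> (\<eta> * norm (v - v2)) powr (1 / \<nu>) - \<beta>"
    and "s powr \<nu> / \<eta> \<le> norm (w - v1)" "s powr \<nu> / \<eta> \<le> norm (w - v2)"
  shows "min (g v1) (g v2) + s - \<beta> \<le> g w"
proof -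
  have "w \<in> Z1 \<or> w \<in> Z2"
    using assms(1) by auto
  then show ?thesis
    using growth_lower_bound[OF assms(2-4), where g = g and v = v1]
      growth_lower_bound[OF assms(2-4), where g = g and v = v2]
      assms(5-8) by force
qed

lemma le_g_r:
  assumes "continuous_on UNIV g" "v \<in> {v1, v2}" "u \<in> ball v r"
  shows "g u \<le> g v + g_r g v1 v2 r"
proof -
  have "compact (g ` cball v r)"
    using assms(1) by (intro compact_continuous_image) (auto intro: continuous_on_subset)
  then have "bdd_above (g ` ball v r)"
    by (meson ball_subset_cball bdd_above_mono bounded_imp_bdd_above compact_imp_bounded image_mono)
  then have "g u \<le> Sup (g ` ball v r)"
    using assms(3) by (intro cSup_upper) auto
  then show ?thesis
    using assms(2) unfolding g_r_def by auto
qed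

lemma g_r_nonneg:
  assumes "continuous_on UNIV g" "r > 0"
  shows "0 \<le> g_r g v1 v2 r"
  using le_g_r[OF assms(1), where u = v1 and v = v1] assms(2) by simp

subsection \<open>The normaliser\<close>

lemma m_r_pos:
  assumes "finite_measure \<rho>" "sets \<rho> = sets borel" "in_support \<rho> v1" "in_support \<rho> v2"
    and "r > 0" "\<tau> \<ge> 3"
  shows "0 < m_r \<tau> \<rho> v1 v2 r"
  using set_integral_phi_bump_pos[OF assms(1,2) _ assms(5,6)] assms(3,4) by (simp add: m_r_def)

lemma integrable_exp_neg_mult:
  fixes g :: "'a::euclidean_space \<Rightarrow> real"
  assumes "finite_measure \<rho>" "sets \<rho> = sets borel" "continuous_on UNIV g"
    and "\<And>w. b \<le> g w" "\<alpha> \<ge> 0"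
  shows "integrable \<rho> (\<lambda>w. exp (- \<alpha> * g w))"
proof (rule finite_measure.integrable_const_bound[OF assms(1), where B = "exp (- \<alpha> * b)"])
  show "AE w in \<rho>. norm (exp (- \<alpha> * g w)) \<le> exp (- \<alpha> * b)"
    using assms(4,5) by (intro AE_I2) (simp add: mult_left_mono)
  show "(\<lambda>w. exp (- \<alpha> * g w)) \<in> borel_measurable \<rho>"
    using borel_measurable_continuous_onI[OF assms(3)]
    unfolding measurable_cong_sets[OF assms(2) refl] by measurable
qed

lemma m_r_le_integral_exp:
  fixes g :: "'a::euclidean_space \<Rightarrow> real"
  assumes "finite_measure \<rho>" "sets \<rho> = sets borel" "continuous_on UNIV g"
    and "integrable \<rho> (\<lambda>w. exp (- \<alpha> * g w))" "\<alpha> \<ge> 0" "r > 0" "\<tau> \<ge> 1"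
  shows "exp (- \<alpha> * (min (g v1) (g v2) + g_r g v1 v2 r)) * m_r \<tau> \<rho> v1 v2 r
           \<le> (\<integral>w. exp (- \<alpha> * g w) \<partial>\<rho>)"
proof -
  obtain v where v: "v \<in> {v1, v2}" "g v = min (g v1) (g v2)"
    by (cases "g v1 \<le> g v2") auto
  have "m_r \<tau> \<rho> v1 v2 r \<le> (\<integral>u\<in>ball v r. phi_bump \<tau> r (u - v) \<partial>\<rho>)"
    using v(1) unfolding m_r_def by auto
  also have "exp (- \<alpha> * (g v + g_r g v1 v2 r)) * \<dots> \<le> (\<integral>w. exp (- \<alpha> * g w) \<partial>\<rho>)"
  proof (rule set_integral_phi_bump_le_integral[OF assms(1,2,4,6,7)])
    show "exp (- \<alpha> * (g v + g_r g v1 v2 r)) \<le> exp (- \<alpha> * g u)" if "u \<in> ball v r" for u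
      using le_g_r[OF assms(3) v(1) that] assms(5) by (simp add: mult_left_mono)
  qed auto
  finally show ?thesis
    using v(2) by simp
qed

lemma dist_le_near_far:
  fixes v1 v2 w vi :: "'a::real_normed_vector"
  assumes "vi \<in> {v1, v2}" "0 \<le> E" "0 \<le> K" "0 \<le> R"
    and "R < norm (w - v1) \<Longrightarrow> R < norm (w - v2) \<Longrightarrow> E \<le> K"
  shows "E * norm (w - vi) \<le> E * (norm (v1 - v2) + R) + K * (norm (w - v2) + norm (v1 - v2))"
proof -
  have v: "norm (v1 - vi) \<le> norm (v1 - v2)" "norm (v2 - vi) \<le> norm (v1 - v2)"
    using assms(1) by (auto simp: norm_minus_commute)
  have tri: "norm (w - vi) \<le> norm (w - v1) + norm (v1 - vi)" "norm (w - vi) \<le> norm (w - v2) + norm (v2 - vi)"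
    using norm_diff_triangle_ineq[of w v1 v1 vi] norm_diff_triangle_ineq[of w v2 v2 vi] by auto
  show ?thesis
  proof (cases "norm (w - v1) \<le> R \<or> norm (w - v2) \<le> R")
    case True
    then have "E * norm (w - vi) \<le> E * (norm (v1 - v2) + R)"
      using v tri assms(2) by (intro mult_left_mono) auto
    then show ?thesis
      using assms(3) by (simp add: add_increasing2)
  next
    case False
    then have "E * norm (w - vi) \<le> K * (norm (w - v2) + norm (v1 - v2))"
      using v tri assms(2,5) by (intro mult_mono) auto
    then show ?thesis
      using assms(2,4) by (simp add: add_increasing)
  qed
qed

lemma consensus_point_dist_le:
  fixes g :: "'a::euclidean_space \<Rightarrow> real"
  assumes "prob_space \<rho>" "sets \<rho> = sets borel" "integrable \<rho> norm"
    and "continuous_on UNIV g" "\<And>w. b \<le> g w" "\<alpha> \<ge> 0"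
    and "0 < Zmin" "Zmin \<le> (\<integral>w. exp (- \<alpha> * g w) \<partial>\<rho>)"
    and "\<And>w. R < norm (w - v1) \<Longrightarrow> R < norm (w - v2) \<Longrightarrow> exp (- \<alpha> * g w) \<le> K"
    and "0 \<le> K" "0 \<le> R" "vi \<in> {v1, v2}"
  shows "norm (consensus_point \<alpha> g \<rho> - vi)
           \<le> norm (v1 - v2) + R + K / Zmin * ((\<integral>w. norm (w - v2) \<partial>\<rho>) + norm (v1 - v2))"
proof -
  define E where "E = (\<lambda>w. exp (- \<alpha> * g w))"
  have E_int: "integrable \<rho> E"
    unfolding E_def using prob_space.finite_measure[OF assms(1)] assms(2,4-6)
    by (rule integrable_exp_neg_mult)
  have "consensus_point \<alpha> g \<rho> = (1 / (\<integral>w. E w \<partial>\<rho>)) *\<^sub>R (\<integral>w. E w *\<^sub>R w \<partial>\<rho>)"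
    by (simp add: consensus_point_def E_def)
  moreover have "E w * norm (w - vi)
      \<le> E w * (norm (v1 - v2) + R) + K * (norm (w - v2) + norm (v1 - v2))" for w
    unfolding E_def using assms(9-12) by (intro dist_le_near_far) auto
  moreover have E_bound: "E w \<le> exp (- \<alpha> * b)" for w
    using assms(5,6) by (simp add: E_def mult_left_mono)
  ultimately show ?thesis
    using assms(7,8,10) by (simp only:) (rule weighted_mean_dist_le[OF assms(1-3) E_int _ E_bound],
      auto simp: E_def)
qed

theorem mainTheorem17:
  fixes g :: "'a::euclidean_space \<Rightarrow> real"
    and Z1 Z2 :: "'a set" and v1 v2 :: 'a
    and \<beta> \<eta> \<nu> \<alpha> r q :: real and \<tau> :: nat and \<rho> :: "'a measure"
  assumes "\<beta> > 0" "\<eta> > 0" "\<nu> > 0"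
    and "Z1 \<in> sets borel" "Z2 \<in> sets borel" "Z1 \<inter> Z2 = {}" "Z1 \<union> Z2 = UNIV"
    and "continuous_on UNIV g"
    and "v1 \<in> Z1" "v2 \<in> Z2"
    and "\<forall>v\<in>Z1. g v - g v1 \<ge> (\<eta> * norm (v - v1)) powr (1 / \<nu>) - \<beta>"
    and "\<forall>v\<in>Z2. g v - g v2 \<ge> (\<eta> * norm (v - v2)) powr (1 / \<nu>) - \<beta>"
    and "prob_space \<rho>" "sets \<rho> = sets borel"
    and "integrable \<rho> (\<lambda>w. norm w)"
    and "in_support \<rho> v1" "in_support \<rho> v2"
    and "\<alpha> > 0" and "\<tau> \<ge> 3"
    and "r > 0" "q > \<beta>"
    and "frontier (ball v1 (q + g_r g v1 v2 r)) \<inter> closure Z1 \<noteq> {}"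
    and "frontier (ball v2 (q + g_r g v1 v2 r)) \<inter> closure Z2 \<noteq> {}"
  shows "\<forall>vi\<in>{v1, v2}.
     norm (consensus_point \<alpha> g \<rho> - vi)
       \<le> norm (v1 - v2) + 2 * (q + g_r g v1 v2 r) powr \<nu> / \<eta>
         + exp (- \<alpha> * (q - \<beta>)) / m_r \<tau> \<rho> v1 v2 r * (\<integral>w. norm (w - v2) \<partial>\<rho>)
         + norm (v1 - v2) * (exp (- \<alpha> * (q - \<beta>)) / m_r \<tau> \<rho> v1 v2 r)"
proof -
  note fin = prob_space.finite_measure[OF assms(13)]
  define gmin where "gmin = min (g v1) (g v2)"
  define R where "R = (q + g_r g v1 v2 r) powr \<nu> / \<eta>"
  define c where "c = exp (- \<alpha> * (gmin + g_r g v1 v2 r))"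
  define e where "e = exp (- \<alpha> * (q - \<beta>))"
  define m where "m = m_r \<tau> \<rho> v1 v2 r"
  have g_ge: "gmin + t - \<beta> \<le> g w"
    if "0 \<le> t" "t powr \<nu> / \<eta> \<le> norm (w - v1)" "t powr \<nu> / \<eta> \<le> norm (w - v2)" for t w
    unfolding gmin_def
    by (rule two_region_growth_lower_bound[OF assms(7,2,3) that(1) assms(11,12) that(2,3)])
  have far: "exp (- \<alpha> * g w) \<le> c * e" if "R < norm (w - v1)" "R < norm (w - v2)" for w
  proof -
    have "\<alpha> * (gmin + (q + g_r g v1 v2 r) - \<beta>) \<le> \<alpha> * g w"
      using g_ge[of "q + g_r g v1 v2 r" w] that g_r_nonneg[OF assms(8,20), of v1 v2] assms(1,18,21)
      by (intro mult_left_mono) (auto simp: R_def)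
    then show ?thesis
      by (simp add: c_def e_def algebra_simps flip: exp_add)
  qed
  have g_bounded_below: "gmin - \<beta> \<le> g w" for w
    using g_ge[of 0 w] assms(2,3) by simp
  have Z_lower: "c * m \<le> (\<integral>w. exp (- \<alpha> * g w) \<partial>\<rho>)"
    unfolding c_def gmin_def m_def using assms(18,19)
    by (intro m_r_le_integral_exp[OF fin assms(14,8) _ _ assms(20)]
        integrable_exp_neg_mult[OF fin assms(14,8) g_bounded_below]) auto
  have m_pos: "0 < m"
    unfolding m_def by (rule m_r_pos[OF fin assms(14,16,17,20,19)])
  have bound: "norm (consensus_point \<alpha> g \<rho> - vi)
      \<le> norm (v1 - v2) + R + c * e / (c * m) * ((\<integral>w. norm (w - v2) \<partial>\<rho>) + norm (v1 - v2))"
    if "vi \<in> {v1, v2}" for vi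
    using assms(2,18) m_pos far that
    by (intro consensus_point_dist_le[OF assms(13-15,8) g_bounded_below _ _ Z_lower])
      (auto simp: R_def c_def e_def)
  have "R \<le> 2 * (q + g_r g v1 v2 r) powr \<nu> / \<eta>"
    using assms(2) by (simp add: R_def divide_le_eq)
  then show ?thesis
    using bound[of v1] bound[of v2]
    by (simp add: c_def e_def m_def distrib_left add_divide_distrib ac_simps)
qed

end
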